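(* Let $n$ be one of the integers for which $\mathbb{Z}[\xi_n]$ has class number one, $\mathcal{M}_n=\mathbb{Z}[\xi_n]$, and $I$ a principal ideal of $\mathcal{M}_n$ of finite index, with $\Lambda\subset\mathbb{R}^{\varphi(n)}$ the lattice representing $\mathcal{M}_n$ and $L$ the sublattice representing $I$. For the Bravais coloring of $\mathcal{M}_n$ determined by $I$, the color symmetry group satisfies $H=T(G)\rtimes D_N$ if and only if $\phi_2(L)=L$.
   Context: Standing assumption: $n\in\{3,4,5,7,8,9,11,12,13,15,16,17,19,20,21,24,25,27,28,32,33,35,36,40,44,45,48,60,84\}$ (the values for which $\mathcal{M}_n=\mathbb{Z}[\xi_n]$, $\xi_n=\exp(2\pi i/n)$, is a principal ideal domain). Let $\varphi$ be Euler's function and $N=n$ if $n$ is even, $N=2n$ if $n$ is odd. Using the $\mathbb{Z}$-basis $\{1,\xi_n,\dots,\xi_n^{\varphi(n)-1}\}$ of $\mathcal{M}_n$, each element is identified with its integer coordinate vector, so $\mathcal{M}_n$ becomes a lattice $\Lambda=\mathbb{Z}^{\varphi(n)}\subset\mathbb{R}^{\varphi(n)}$, and a principal ideal $I$ of index $\ell$ becomes a sublattice $L\subseteq\Lambda$ of index $\ell$. Let $\phi_1$ be the linear map of $\mathbb{R}^{\varphi(n)}$ induced by multiplication by $\exp(2\pi i/N)$ (an $N$-fold rotation) and $\phi_2$ the linear map induced by complex conjugation (a reflection); they generate a group $D_N$, dihedral of order $2N$. Let $T(G)=\{t_y: x\mapsto x+y \mid y\in\Lambda\}$. The symmetry group of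 $\Lambda$ is $G=T(G)\rtimes D_N$. The Bravais coloring determined by $I$ assigns to each element of $\Lambda$ one of $\ell$ colors, two elements getting the same color iff they lie in the same coset of $L$ in $\Lambda$. The color symmetry group $H$ is the set of $g\in G$ that permute the colors, i.e. for every coset $x+L$ the image $g(x+L)$ is again a coset of $L$. *)

theory Defs
  imports "HOL-Computational_Algebra.Polynomial" Complex_Main
begin

definition pid_cyclotomic_indices :: "nat set" where
  "pid_cyclotomic_indices = {3,4,5,7,8,9,11,12,13,15,16,17,19,20,21,24,25,27,28,32,33,35,36,40,44,45,48,60,84}"

definition xi :: "nat \<Rightarrow> complex" where
  "xi n = exp (2 * of_real pi * \<i> / of_nat n)"

definition bigN :: "nat \<Rightarrow> nat" where
  "bigN n = (if even n then n else 2 * n)"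

text \<open>M_n = Z[xi_n], realised inside the complex numbers; the lattice Lambda is its
  image under the coordinate isomorphism with respect to the basis 1, xi, ..., xi^(phi(n)-1).\<close>
definition Mn :: "nat \<Rightarrow> complex set" where
  "Mn n = {poly (map_poly of_int p) (xi n) | p :: int poly. True}"

definition phi1 :: "nat \<Rightarrow> complex \<Rightarrow> complex" where
  "phi1 n z = exp (2 * of_real pi * \<i> / of_nat (bigN n)) * z"

definition phi2 :: "complex \<Rightarrow> complex" where
  "phi2 = cnj"

definition DN :: "nat \<Rightarrow> (complex \<Rightarrow> complex) set" where
  "DN n = {(phi1 n ^^ k) \<circ> (phi2 ^^ e) | k e. k < bigN n \<and> e < 2}"

definition TG :: "nat \<Rightarrow> (complex \<Rightarrow> complex) set" where
  "TG n = {(\<lambda>x. x + y) | y. y \<in> Mn n}"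

definition semidirect_TD :: "nat \<Rightarrow> (complex \<Rightarrow> complex) set" where
  "semidirect_TD n = {t \<circ> h | t h. t \<in> TG n \<and> h \<in> DN n}"

definition Gsym :: "nat \<Rightarrow> (complex \<Rightarrow> complex) set" where
  "Gsym n = semidirect_TD n"

text \<open>Cosets of a sublattice L in the lattice M_n (the colors).\<close>
definition cosets_in :: "nat \<Rightarrow> complex set \<Rightarrow> complex set set" where
  "cosets_in n L = {(\<lambda>z. x + z) ` L | x. x \<in> Mn n}"

definition color_symmetry_group :: "nat \<Rightarrow> complex set \<Rightarrow> (complex \<Rightarrow> complex) set" where
  "color_symmetry_group n L =
     {g \<in> Gsym n. \<forall>C \<in> cosets_in n L. g ` C \<in> cosets_in n L}"

definition principal_ideal :: "nat \<Rightarrow> complex set \<Rightarrow> bool" where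
  "principal_ideal n I \<longleftrightarrow> (\<exists>a \<in> Mn n. I = {a * x | x. x \<in> Mn n})"

definition finite_index :: "nat \<Rightarrow> complex set \<Rightarrow> bool" where
  "finite_index n I \<longleftrightarrow> finite (cosets_in n I)"

end

theory Submission
  imports Defs "HOL-Analysis.Complex_Transcendental"
begin

text \<open>Every element of \<open>D\<^sub>N\<close> is \<open>z \<mapsto> u z\<close> or \<open>z \<mapsto> u z\<^sup>*\<close> with \<open>u\<close> a unit of \<open>\<M>\<^sub>n\<close>.
  Multiplication by a unit fixes the principal ideal \<open>I\<close>, so all of \<open>T(G) \<rtimes> D\<^sub>N\<close> permutes the
  cosets of \<open>I\<close> as soon as conjugation fixes \<open>I\<close>. Conversely, if conjugation permutes the cosets
  then it maps \<open>I\<close> to a coset containing \<open>0\<close>, which is \<open>I\<close> itself.\<close>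

lemma map_poly_of_int_add: "map_poly of_int (p + q) = map_poly of_int p + (map_poly of_int q :: complex poly)"
  by (simp add: poly_eq_iff coeff_map_poly)

lemma map_poly_of_int_uminus: "map_poly of_int (- p) = - (map_poly of_int p :: complex poly)"
  by (simp add: poly_eq_iff coeff_map_poly)

lemma map_poly_of_int_mult: "map_poly of_int (p * q) = map_poly of_int p * (map_poly of_int q :: complex poly)"
  by (simp add: poly_eq_iff coeff_map_poly coeff_mult)

lemma Mn_add: "x \<in> Mn n \<Longrightarrow> y \<in> Mn n \<Longrightarrow> x + y \<in> Mn n"
  unfolding Mn_def by (auto, metis map_poly_of_int_add poly_add)

lemma Mn_uminus: "x \<in> Mn n \<Longrightarrow> - x \<in> Mn n"
  unfolding Mn_def by (auto, metis map_poly_of_int_uminus poly_minus)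

lemma Mn_mult: "x \<in> Mn n \<Longrightarrow> y \<in> Mn n \<Longrightarrow> x * y \<in> Mn n"
  unfolding Mn_def by (auto, metis map_poly_of_int_mult poly_mult)

lemma of_int_in_Mn: "of_int k \<in> Mn n"
  unfolding Mn_def by (rule CollectI, rule exI[of _ "[:k:]"]) (simp add: map_poly_pCons)

lemma zero_in_Mn: "0 \<in> Mn n"
  using of_int_in_Mn[of 0] by simp

lemma one_in_Mn: "1 \<in> Mn n"
  using of_int_in_Mn[of 1] by simp

lemma xi_in_Mn: "xi n \<in> Mn n"
  unfolding Mn_def by (rule CollectI, rule exI[of _ "[:0, 1:]"]) (simp add: map_poly_pCons)

lemma Mn_power: "x \<in> Mn n \<Longrightarrow> x ^ k \<in> Mn n"
  by (induct k) (auto intro: Mn_mult one_in_Mn)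

lemma poly_of_int_in_Mn: "w \<in> Mn n \<Longrightarrow> poly (map_poly of_int p) w \<in> Mn n"
  by (induct p) (auto simp: map_poly_pCons intro!: Mn_add Mn_mult of_int_in_Mn zero_in_Mn)

lemma xi_power_self: "n > 0 \<Longrightarrow> xi n ^ n = 1"
proof -
  assume "n > 0"
  have "xi n ^ n = exp (of_nat n * (2 * of_real pi * \<i> / of_nat n))"
    unfolding xi_def by (rule exp_of_nat_mult[symmetric])
  also have "\<dots> = 1"
    using \<open>n > 0\<close> by simp
  finally show ?thesis .
qed

lemma cnj_xi: "n > 0 \<Longrightarrow> cnj (xi n) = xi n ^ (n - 1)"
proof -
  assume n: "n > 0"
  have "cnj (xi n) * xi n = 1"
    unfolding xi_def by (simp add: exp_cnj flip: exp_add)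
  moreover have "xi n ^ (n - 1) * xi n = 1"
    using xi_power_self[OF n] n by (metis power_minus_mult)
  ultimately show ?thesis
    by (metis mult.commute mult.right_neutral mult.assoc)
qed

lemma cnj_in_Mn: "n > 0 \<Longrightarrow> x \<in> Mn n \<Longrightarrow> cnj x \<in> Mn n"
proof -
  assume n: "n > 0" and "x \<in> Mn n"
  then obtain p where x: "x = poly (map_poly of_int p) (xi n)"
    unfolding Mn_def by auto
  have "cnj x = poly (map_poly cnj (map_poly of_int p)) (cnj (xi n))"
    unfolding x by (rule poly_cnj)
  also have "map_poly cnj (map_poly of_int p) = map_poly of_int p"
    by (simp add: poly_eq_iff coeff_map_poly)
  finally have "cnj x = poly (map_poly of_int p) (xi n ^ (n - 1))"
    using cnj_xi[OF n] by simp
  then show ?thesis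
    using poly_of_int_in_Mn Mn_power xi_in_Mn by metis
qed

definition rotation_unit :: "nat \<Rightarrow> complex" where
  "rotation_unit n = exp (2 * of_real pi * \<i> / of_nat (bigN n))"

lemma rotation_unit_mult_cnj: "rotation_unit n * cnj (rotation_unit n) = 1"
  unfolding rotation_unit_def by (simp add: exp_cnj flip: exp_add)

text \<open>For odd \<open>n\<close> the rotation unit is \<open>-\<xi>\<^sub>n ^ ((n + 1) / 2)\<close>.\<close>

lemma rotation_unit_in_Mn: "n > 0 \<Longrightarrow> rotation_unit n \<in> Mn n"
proof (cases "even n")
  case True
  then show ?thesis
    by (simp add: rotation_unit_def bigN_def xi_def xi_in_Mn[unfolded xi_def])
next
  case False
  assume n: "n > 0"
  define c where "c = rotation_unit n"
  have half: "n + 1 = 2 * ((n + 1) div 2)"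
    using False by presburger
  have N: "bigN n = 2 * n"
    using False by (simp add: bigN_def)
  have "c ^ 2 = exp (of_nat 2 * (2 * of_real pi * \<i> / of_nat (2 * n)))"
    unfolding c_def rotation_unit_def N by (rule exp_of_nat_mult[symmetric])
  also have "\<dots> = xi n"
    unfolding xi_def using n by (simp add: field_simps)
  finally have square: "c ^ 2 = xi n" .
  have "c ^ n = exp (of_nat n * (2 * of_real pi * \<i> / of_nat (2 * n)))"
    unfolding c_def rotation_unit_def N by (rule exp_of_nat_mult[symmetric])
  also have "\<dots> = exp (of_real pi * \<i>)"
    using n by (simp add: field_simps)
  finally have "c ^ n = -1"
    by simp
  then have "- c = c ^ (n + 1)"
    by (simp add: power_add)
  also have "\<dots> = (c ^ 2) ^ ((n + 1) div 2)"
    using half by (metis power_mult)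
  also have "\<dots> = xi n ^ ((n + 1) div 2)"
    by (simp only: square)
  finally show ?thesis
    unfolding c_def by (metis Mn_power Mn_uminus minus_minus xi_in_Mn)
qed

lemma phi1_funpow: "(phi1 n ^^ k) z = rotation_unit n ^ k * z"
  by (induct k arbitrary: z) (auto simp: phi1_def rotation_unit_def)

lemma DN_cases:
  assumes "h \<in> DN n"
  obtains k where "h = (\<lambda>z. rotation_unit n ^ k * z)" | k where "h = (\<lambda>z. rotation_unit n ^ k * cnj z)"
proof -
  obtain k e where h: "h = (phi1 n ^^ k) \<circ> (phi2 ^^ e)" and "e < 2"
    using assms unfolding DN_def by auto
  then consider "e = 0" | "e = 1"
    by linarith
  then show ?thesis
  proof cases
    case 1
    with h show ?thesis
      by (intro that(1)[of k]) (simp add: phi1_funpow comp_def)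
  next
    case 2
    with h show ?thesis
      by (intro that(2)[of k]) (simp add: phi1_funpow phi2_def comp_def)
  qed
qed

lemma cnj_in_DN: "n > 0 \<Longrightarrow> cnj \<in> DN n"
  unfolding DN_def phi2_def
  by (rule CollectI, rule exI[of _ 0], rule exI[of _ 1]) (simp add: bigN_def)

lemma zero_in_principal_ideal: "principal_ideal n I \<Longrightarrow> 0 \<in> I"
  unfolding principal_ideal_def using zero_in_Mn by (auto intro!: exI[of _ 0])

lemma principal_ideal_add:
  assumes "principal_ideal n I" and "x \<in> I" and "y \<in> I"
  shows "x + y \<in> I"
proof -
  obtain a where I: "I = {a * z | z. z \<in> Mn n}"
    using assms(1) unfolding principal_ideal_def by auto
  then obtain u v where "u \<in> Mn n" "v \<in> Mn n" "x = a * u" "y = a * v"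
    using assms(2,3) by auto
  then show ?thesis
    unfolding I by (auto simp: distrib_left intro!: exI[of _ "u + v"] Mn_add)
qed

lemma principal_ideal_mult:
  assumes "principal_ideal n I" and "w \<in> Mn n" and "x \<in> I"
  shows "w * x \<in> I"
proof -
  obtain a where I: "I = {a * z | z. z \<in> Mn n}"
    using assms(1) unfolding principal_ideal_def by auto
  then obtain u where "u \<in> Mn n" "x = a * u"
    using assms(3) by auto
  then have "w * x = a * (w * u)" and "w * u \<in> Mn n"
    using assms(2) by (simp_all add: mult.left_commute Mn_mult)
  then show ?thesis
    unfolding I by blast
qed

lemma principal_ideal_uminus:
  assumes "principal_ideal n I" and "x \<in> I"
  shows "- x \<in> I"
  using principal_ideal_mult[OF assms(1) Mn_uminus[OF one_in_Mn] assms(2)] by simp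

lemma principal_ideal_image_mult_unit:
  assumes I: "principal_ideal n I"
    and u: "u \<in> Mn n" and v: "v \<in> Mn n" and uv: "u * v = 1"
  shows "(\<lambda>z. u * z) ` I = I"
proof -
  have scale: "(\<lambda>z. w * z) ` I \<subseteq> I" if "w \<in> Mn n" for w
    using principal_ideal_mult[OF I that] by blast
  have "I = (\<lambda>z. u * z) ` ((\<lambda>z. v * z) ` I)"
    by (simp add: image_image uv flip: mult.assoc)
  also have "\<dots> \<subseteq> (\<lambda>z. u * z) ` I"
    using scale[OF v] by (rule image_mono)
  finally show ?thesis
    using scale[OF u] by (rule antisym[rotated])
qed

lemma translate_principal_ideal_by_member:
  assumes I: "principal_ideal n I" and x: "x \<in> I"
  shows "(\<lambda>z. x + z) ` I = I"
proof
  show "(\<lambda>z. x + z) ` I \<subseteq> I"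
    using principal_ideal_add[OF I x] by blast
  show "I \<subseteq> (\<lambda>z. x + z) ` I"
  proof
    fix w assume "w \<in> I"
    then have "- x + w \<in> I"
      using principal_ideal_add[OF I] principal_ideal_uminus[OF I x] by blast
    then show "w \<in> (\<lambda>z. x + z) ` I"
      by (rule rev_image_eqI) simp
  qed
qed

lemma coset_containing_zero:
  assumes I: "principal_ideal n I" and "0 \<in> (\<lambda>z. x + z) ` I"
  shows "(\<lambda>z. x + z) ` I = I"
proof -
  obtain z where "z \<in> I" and "x = - z"
    using assms(2) by (auto simp: add_eq_0_iff)
  then have "x \<in> I"
    using principal_ideal_uminus[OF I] by simp
  then show ?thesis
    by (rule translate_principal_ideal_by_member[OF I])
qed

lemma affine_map_permutes_cosets:
  assumes additive: "\<And>x z. h (x + z) = h x + h z"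
    and lattice: "\<And>x. x \<in> Mn n \<Longrightarrow> h x \<in> Mn n"
    and ideal: "h ` I = I"
    and y: "y \<in> Mn n"
    and C: "C \<in> cosets_in n I"
  shows "((\<lambda>x. x + y) \<circ> h) ` C \<in> cosets_in n I"
proof -
  obtain x where x: "x \<in> Mn n" and C_eq: "C = (\<lambda>z. x + z) ` I"
    using C unfolding cosets_in_def by auto
  have "((\<lambda>x. x + y) \<circ> h) ` C = (\<lambda>z. (h x + y) + z) ` (h ` I)"
    using C_eq additive by (auto simp: image_image algebra_simps)
  also have "\<dots> = (\<lambda>z. (h x + y) + z) ` I"
    using ideal by simp
  finally show ?thesis
    unfolding cosets_in_def using Mn_add[OF lattice[OF x] y] by blast
qed

lemma rotation_unit_power_fixes_ideal:
  assumes n: "n > 0" and I: "principal_ideal n I"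
  shows "(\<lambda>z. rotation_unit n ^ k * z) ` I = I"
proof (rule principal_ideal_image_mult_unit[OF I])
  show "rotation_unit n ^ k \<in> Mn n" and "cnj (rotation_unit n) ^ k \<in> Mn n"
    using rotation_unit_in_Mn[OF n] cnj_in_Mn[OF n] by (simp_all add: Mn_power)
  show "rotation_unit n ^ k * cnj (rotation_unit n) ^ k = 1"
    by (simp add: rotation_unit_mult_cnj flip: power_mult_distrib)
qed

lemma DN_fixes_ideal:
  assumes n: "n > 0" and I: "principal_ideal n I" and conj: "cnj ` I = I"
    and h: "h \<in> DN n"
  shows "h ` I = I"
  using h
proof (cases rule: DN_cases)
  case (1 k)
  then show ?thesis
    using rotation_unit_power_fixes_ideal[OF n I] by simp
next
  case (2 k)
  then have "h ` I = (\<lambda>z. rotation_unit n ^ k * z) ` (cnj ` I)"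
    by (simp add: image_image)
  then show ?thesis
    using rotation_unit_power_fixes_ideal[OF n I] conj by simp
qed

lemma DN_additive: "h \<in> DN n \<Longrightarrow> h (x + z) = h x + h z"
  by (erule DN_cases) (simp_all add: distrib_left)

lemma DN_maps_Mn: "n > 0 \<Longrightarrow> h \<in> DN n \<Longrightarrow> x \<in> Mn n \<Longrightarrow> h x \<in> Mn n"
  by (erule DN_cases) (simp_all add: Mn_mult Mn_power rotation_unit_in_Mn cnj_in_Mn)

lemma semidirect_TD_subset_color_symmetry_group:
  assumes n: "n > 0" and I: "principal_ideal n I" and conj: "cnj ` I = I"
  shows "semidirect_TD n \<subseteq> color_symmetry_group n I"
proof
  fix g assume g: "g \<in> semidirect_TD n"
  then obtain y h where g_eq: "g = (\<lambda>x. x + y) \<circ> h" and y: "y \<in> Mn n" and h: "h \<in> DN n"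
    unfolding semidirect_TD_def TG_def by auto
  have "\<forall>C \<in> cosets_in n I. g ` C \<in> cosets_in n I"
    unfolding g_eq
    using affine_map_permutes_cosets[OF DN_additive[OF h] DN_maps_Mn[OF n h] DN_fixes_ideal[OF n I conj h] y]
    by (intro ballI)
  with g show "g \<in> color_symmetry_group n I"
    unfolding color_symmetry_group_def Gsym_def mem_Collect_eq by (intro conjI)
qed

lemma color_symmetry_group_cnj_fixes_ideal:
  assumes I: "principal_ideal n I" and cnj_sym: "cnj \<in> color_symmetry_group n I"
  shows "cnj ` I = I"
proof -
  have "I = (\<lambda>z. 0 + z) ` I"
    by simp
  then have "I \<in> cosets_in n I"
    unfolding cosets_in_def using zero_in_Mn by blast
  with cnj_sym have "cnj ` I \<in> cosets_in n I"
    unfolding color_symmetry_group_def by simp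
  then obtain x where x: "cnj ` I = (\<lambda>z. x + z) ` I"
    unfolding cosets_in_def by blast
  have "0 \<in> I"
    by (rule zero_in_principal_ideal[OF I])
  then have "0 \<in> (\<lambda>z. x + z) ` I"
    unfolding x[symmetric] by (rule rev_image_eqI) simp
  with x show ?thesis
    using coset_containing_zero[OF I] by simp
qed

theorem theorem3p1p2:
  fixes n :: nat and I :: "complex set"
  assumes "n \<in> pid_cyclotomic_indices"
    and "principal_ideal n I"
    and "finite_index n I"
  shows "color_symmetry_group n I = semidirect_TD n \<longleftrightarrow> phi2 ` I = I"
proof
  have n: "n > 0"
    using assms(1) unfolding pid_cyclotomic_indices_def by auto
  show "phi2 ` I = I" if "color_symmetry_group n I = semidirect_TD n"
  proof -
    have "(\<lambda>x. x + 0) \<circ> cnj \<in> semidirect_TD n"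
      unfolding semidirect_TD_def TG_def using cnj_in_DN[OF n] zero_in_Mn by blast
    then have "cnj \<in> color_symmetry_group n I"
      using that by (simp add: comp_def)
    then show ?thesis
      unfolding phi2_def by (rule color_symmetry_group_cnj_fixes_ideal[OF assms(2)])
  qed
  show "color_symmetry_group n I = semidirect_TD n" if "phi2 ` I = I"
  proof
    show "color_symmetry_group n I \<subseteq> semidirect_TD n"
      unfolding color_symmetry_group_def Gsym_def by blast
    show "semidirect_TD n \<subseteq> color_symmetry_group n I"
      using semidirect_TD_subset_color_symmetry_group[OF n assms(2)] that by (simp add: phi2_def)
  qed
qed

end
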